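(* Let $S$ be a left fairly amenable semigroup with left fairly invariant finitely-additive probability measure $\mu$, let $s\in S$, and let $f:S\to[0,\infty)$ be bounded. If $s\ast f$ is bounded (with all defining sums convergent), then $\int (s\ast f)\,d\mu=\int f\,d\mu$.
   Context: For a semigroup $S$, $s\in S$, $A\subseteq S$: $sA=\{sa:a\in A\}$; $s$ acts injectively on the left of $A$ if $a\mapsto sa$ is injective on $A$. A finitely-additive probability measure on $S$ is $\mu:\mathcal P(S)\to[0,1]$, $\mu(S)=1$, additive on disjoint sets; it is left fairly invariant if $\mu(sA)=\mu(A)$ whenever $s$ acts injectively on the left of $A$. $S$ is left fairly amenable if such $\mu$ exists. For bounded $f$, $(s\ast f)(x)=\sum_{t\in S,\ st=x}f(t)$. For a finitely-additive measure, the integral of a non-negative simple function $\sum_i a_i\chi_{A_i}$ (finite sum) is $\sum_i a_i\mu(A_i)$, and for a bounded non-negative $f$, $\int f\,d\mu$ is the supremum of integrals of simple functions $h\le f$. *)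

theory Defs
  imports "HOL-Analysis.Analysis"
begin

definition fa_prob_measure :: "('a set \<Rightarrow> real) \<Rightarrow> bool" where
  "fa_prob_measure \<mu> \<longleftrightarrow>
     (\<forall>A. 0 \<le> \<mu> A \<and> \<mu> A \<le> 1) \<and> \<mu> UNIV = 1 \<and>
     (\<forall>A B. A \<inter> B = {} \<longrightarrow> \<mu> (A \<union> B) = \<mu> A + \<mu> B)"

definition left_fairly_invariant :: "('a::semigroup_mult set \<Rightarrow> real) \<Rightarrow> bool" where
  "left_fairly_invariant \<mu> \<longleftrightarrow>
     (\<forall>s A. inj_on (\<lambda>a. s * a) A \<longrightarrow> \<mu> ((\<lambda>a. s * a) ` A) = \<mu> A)"

definition left_fairly_amenable :: "'a::semigroup_mult itself \<Rightarrow> bool" where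
  "left_fairly_amenable _ \<longleftrightarrow>
     (\<exists>\<mu> :: 'a set \<Rightarrow> real. fa_prob_measure \<mu> \<and> left_fairly_invariant \<mu>)"

definition lconv :: "'a::semigroup_mult \<Rightarrow> ('a \<Rightarrow> real) \<Rightarrow> 'a \<Rightarrow> real" where
  "lconv s f x = infsum f {t. s * t = x}"

definition fa_integral :: "('a set \<Rightarrow> real) \<Rightarrow> ('a \<Rightarrow> real) \<Rightarrow> real" where
  "fa_integral \<mu> f = Sup {(\<Sum>i<n. a i * \<mu> (A i)) | (n::nat) (a::nat \<Rightarrow> real) (A::nat \<Rightarrow> 'a set).
      (\<forall>i<n. 0 \<le> a i) \<and> (\<forall>x. (\<Sum>i<n. a i * indicator (A i) x) \<le> f x)}"

end

theory Submission
  imports Defs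
begin

text \<open>
  For \<open>\<integral>f \<le> \<integral>s\<ast>f\<close>: a simple function below \<open>f\<close> is at least some \<open>\<delta> > 0\<close> on its
  support \<open>D\<close>, so every fibre of \<open>t \<mapsto> s * t\<close> on \<open>D\<close> has at most \<open>M/\<delta>\<close> points, where \<open>M\<close>
  bounds \<open>s\<ast>f\<close>. Numbering the points of each fibre cuts \<open>D\<close> into finitely many pieces on
  which left multiplication by \<open>s\<close> is injective, and translating the pieces gives a simple
  function below \<open>s\<ast>f\<close> with the same integral, by fair invariance.

  For \<open>\<integral>s\<ast>f \<le> \<integral>f + 3\<epsilon>\<close>: approximate \<open>(s\<ast>f)(x)\<close> within \<open>\<epsilon>\<close> by the sum of \<open>f\<close> over a
  finite part \<open>E x\<close> of the fibre. The set \<open>Y\<close> of points whose \<open>E x\<close> has at least \<open>N\<close>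
  elements is covered by the injective image of each of \<open>N\<close> disjoint pieces, so \<open>\<mu> Y \<le> 1/N\<close>. Off \<open>Y\<close>,
  translating a staircase approximation of \<open>f\<close> on the \<open>E x\<close> piece by piece dominates \<open>s\<ast>f\<close>
  up to \<open>2\<epsilon>\<close>, and its integral is at most \<open>\<integral>f\<close>.
\<close>

locale fa_prob_space =
  fixes \<mu> :: "'a set \<Rightarrow> real"
  assumes fa_prob_measure: "fa_prob_measure \<mu>"
begin

lemma measure_nonneg: "0 \<le> \<mu> A"
  and measure_le_1: "\<mu> A \<le> 1"
  and measure_UNIV: "\<mu> UNIV = 1"
  and measure_Un: "A \<inter> B = {} \<Longrightarrow> \<mu> (A \<union> B) = \<mu> A + \<mu> B"
  using fa_prob_measure unfolding fa_prob_measure_def by blast+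

lemma measure_empty: "\<mu> {} = 0"
  using measure_Un[of "{}" "{}"] by simp

lemma measure_split: "\<mu> A = \<mu> (A \<inter> D) + \<mu> (A - D)"
  using measure_Un[of "A \<inter> D" "A - D"] by (simp add: Int_Diff_Un Int_Diff_disjoint)

lemma measure_mono: "A \<subseteq> B \<Longrightarrow> \<mu> A \<le> \<mu> B"
  using measure_split[of B A] measure_nonneg[of "B - A"] by (simp add: Int_absorb1)

lemma measure_finite_UN:
  "finite K \<Longrightarrow> disjoint_family_on P K \<Longrightarrow> \<mu> (\<Union>k\<in>K. P k) = (\<Sum>k\<in>K. \<mu> (P k))"
proof (induction K rule: finite_induct)
  case empty
  then show ?case by (simp add: measure_empty)
next
  case (insert j K)
  then have "disjoint_family_on P K" and "P j \<inter> (\<Union>k\<in>K. P k) = {}"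
    unfolding disjoint_family_on_insert[OF insert.hyps(2)] by blast+
  then show ?case using insert by (simp add: measure_Un)
qed

lemma simple_integral_nonneg_on:
  fixes a :: "'i \<Rightarrow> real"
  assumes "finite I" and "\<forall>x\<in>D. 0 \<le> c + (\<Sum>i\<in>I. a i * indicator (A i) x)"
  shows "0 \<le> c * \<mu> D + (\<Sum>i\<in>I. a i * \<mu> (A i \<inter> D))"
  using assms
proof (induction I arbitrary: c D rule: finite_induct)
  case empty
  then show ?case
    by (cases "D = {}") (auto simp: measure_empty measure_nonneg)
next
  case (insert j I)
  have ind: "(\<Sum>i\<in>insert j I. a i * indicator (A i) x)
      = a j * indicator (A j) x + (\<Sum>i\<in>I. a i * indicator (A i) x)" for x
    using insert.hyps by (rule sum.insert)
  have inside: "0 \<le> (c + a j) * \<mu> (D \<inter> A j) + (\<Sum>i\<in>I. a i * \<mu> (A i \<inter> (D \<inter> A j)))"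
    by (rule insert.IH) (use insert.prems ind in \<open>auto simp: add.assoc\<close>)
  have outside: "0 \<le> c * \<mu> (D - A j) + (\<Sum>i\<in>I. a i * \<mu> (A i \<inter> (D - A j)))"
    by (rule insert.IH) (use insert.prems ind in auto)
  have "\<mu> (A i \<inter> D) = \<mu> (A i \<inter> (D \<inter> A j)) + \<mu> (A i \<inter> (D - A j))" for i
    using measure_split[of "A i \<inter> D" "A j"] by (simp add: Int_assoc Int_Diff)
  then have "(\<Sum>i\<in>I. a i * \<mu> (A i \<inter> D))
      = (\<Sum>i\<in>I. a i * \<mu> (A i \<inter> (D \<inter> A j))) + (\<Sum>i\<in>I. a i * \<mu> (A i \<inter> (D - A j)))"
    by (simp add: distrib_left sum.distrib)
  moreover have "\<mu> D = \<mu> (D \<inter> A j) + \<mu> (D - A j)" by (rule measure_split)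
  ultimately have "c * \<mu> D + (\<Sum>i\<in>insert j I. a i * \<mu> (A i \<inter> D))
      = ((c + a j) * \<mu> (D \<inter> A j) + (\<Sum>i\<in>I. a i * \<mu> (A i \<inter> (D \<inter> A j))))
        + (c * \<mu> (D - A j) + (\<Sum>i\<in>I. a i * \<mu> (A i \<inter> (D - A j))))"
    using insert.hyps by (simp add: Int_commute algebra_simps)
  with inside outside show ?case by linarith
qed

lemma simple_integral_mono_on:
  fixes a :: "'i \<Rightarrow> real" and b :: "'j \<Rightarrow> real"
  assumes "finite I" "finite J"
    and le: "\<forall>x\<in>D. (\<Sum>i\<in>I. a i * indicator (A i) x) \<le> c + (\<Sum>j\<in>J. b j * indicator (B j) x)"
  shows "(\<Sum>i\<in>I. a i * \<mu> (A i \<inter> D)) \<le> c * \<mu> D + (\<Sum>j\<in>J. b j * \<mu> (B j \<inter> D))"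
proof -
  let ?a = "case_sum (\<lambda>i. - a i) b" and ?A = "case_sum A B"
  have "0 \<le> c * \<mu> D + (\<Sum>k\<in>I <+> J. ?a k * \<mu> (?A k \<inter> D))"
  proof (rule simple_integral_nonneg_on)
    show "\<forall>x\<in>D. 0 \<le> c + (\<Sum>k\<in>I <+> J. ?a k * indicator (?A k) x)"
      using le by (simp only: sum.Plus[OF assms(1,2)] o_def sum.case mult_minus_left sum_negf)
        (auto simp: algebra_simps)
  qed (use assms in simp)
  then show ?thesis
    by (simp only: sum.Plus[OF assms(1,2)] o_def sum.case mult_minus_left sum_negf)
qed

lemma simple_integral_mono:
  fixes a :: "'i \<Rightarrow> real" and b :: "'j \<Rightarrow> real"
  assumes "finite I" "finite J"
    and "\<And>x. (\<Sum>i\<in>I. a i * indicator (A i) x) \<le> c + (\<Sum>j\<in>J. b j * indicator (B j) x)"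
  shows "(\<Sum>i\<in>I. a i * \<mu> (A i)) \<le> c + (\<Sum>j\<in>J. b j * \<mu> (B j))"
  using simple_integral_mono_on[of I J UNIV a A c b B] assms by (simp add: measure_UNIV)

lemma simple_integral_mono_except:
  fixes a :: "'i \<Rightarrow> real" and b :: "'j \<Rightarrow> real"
  assumes "finite I" "finite J" and "0 \<le> c" and "\<And>j. j \<in> J \<Longrightarrow> 0 \<le> b j"
    and "\<forall>x\<in>Y. (\<Sum>i\<in>I. a i * indicator (A i) x) \<le> d"
    and "\<forall>x\<in>-Y. (\<Sum>i\<in>I. a i * indicator (A i) x) \<le> c + (\<Sum>j\<in>J. b j * indicator (B j) x)"
  shows "(\<Sum>i\<in>I. a i * \<mu> (A i)) \<le> d * \<mu> Y + c + (\<Sum>j\<in>J. b j * \<mu> (B j))"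
proof -
  have "(\<Sum>i\<in>I. a i * \<mu> (A i)) = (\<Sum>i\<in>I. a i * \<mu> (A i \<inter> Y)) + (\<Sum>i\<in>I. a i * \<mu> (A i \<inter> -Y))"
    by (simp add: measure_split[of "A _" Y] Diff_eq distrib_left sum.distrib)
  also have "(\<Sum>i\<in>I. a i * \<mu> (A i \<inter> Y)) \<le> d * \<mu> Y"
    using simple_integral_mono_on[of I "{}" Y a A d] assms(1,5) by simp
  also have "(\<Sum>i\<in>I. a i * \<mu> (A i \<inter> -Y)) \<le> c * \<mu> (-Y) + (\<Sum>j\<in>J. b j * \<mu> (B j \<inter> -Y))"
    using simple_integral_mono_on assms(1,2,6) by blast
  also have "\<dots> \<le> c + (\<Sum>j\<in>J. b j * \<mu> (B j))"
  proof (rule add_mono)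
    show "c * \<mu> (-Y) \<le> c" using assms(3) measure_le_1 by (simp add: mult_left_le)
    show "(\<Sum>j\<in>J. b j * \<mu> (B j \<inter> -Y)) \<le> (\<Sum>j\<in>J. b j * \<mu> (B j))"
      using assms(4) by (intro sum_mono mult_left_mono measure_mono) auto
  qed
  finally show ?thesis by simp
qed

lemma fa_integral_upper:
  fixes a :: "'i \<Rightarrow> real"
  assumes "bdd_above (range g)" and "finite I" and "\<And>i. i \<in> I \<Longrightarrow> 0 \<le> a i"
    and "\<And>x. (\<Sum>i\<in>I. a i * indicator (A i) x) \<le> g x"
  shows "(\<Sum>i\<in>I. a i * \<mu> (A i)) \<le> fa_integral \<mu> g"
proof -
  let ?S = "{(\<Sum>i<n. a i * \<mu> (A i)) | (n::nat) (a::nat \<Rightarrow> real) (A::nat \<Rightarrow> 'a set).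
      (\<forall>i<n. 0 \<le> a i) \<and> (\<forall>x. (\<Sum>i<n. a i * indicator (A i) x) \<le> g x)}"
  obtain c where c: "\<And>x. g x \<le> c"
    using assms(1) by (auto simp: bdd_above_def)
  have "bdd_above ?S"
  proof (rule bdd_aboveI, safe)
    fix n :: nat and a' :: "nat \<Rightarrow> real" and A' :: "nat \<Rightarrow> 'a set"
    assume "\<forall>x. (\<Sum>i<n. a' i * indicator (A' i) x) \<le> g x"
    then show "(\<Sum>i<n. a' i * \<mu> (A' i)) \<le> c"
      using simple_integral_mono[of "{..<n}" "{}" a' A' c] c by (force intro: order_trans)
  qed
  moreover obtain h where h: "bij_betw h {..<card I} I"
    using ex_bij_betw_nat_finite[OF assms(2)] by (auto simp: atLeast0LessThan)
  then have reindex: "sum \<phi> I = (\<Sum>k<card I. \<phi> (h k))" for \<phi> :: "'i \<Rightarrow> real"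
    by (simp add: sum.reindex_bij_betw)
  have "(\<Sum>i\<in>I. a i * \<mu> (A i)) \<in> ?S"
    using assms(3,4) h unfolding reindex
    by (intro CollectI exI[of _ "card I"] exI[of _ "a \<circ> h"] exI[of _ "A \<circ> h"])
       (auto simp: bij_betw_apply)
  ultimately show ?thesis
    unfolding fa_integral_def by (rule cSup_upper[rotated])
qed

lemma fa_integral_least:
  assumes "\<And>x. 0 \<le> g x"
    and "\<And>n a A. \<forall>i<n. 0 \<le> a i \<Longrightarrow> \<forall>x. (\<Sum>i<n. a i * indicator (A i) x) \<le> g x
      \<Longrightarrow> (\<Sum>i<(n::nat). a i * \<mu> (A i)) \<le> v"
  shows "fa_integral \<mu> g \<le> v"
  unfolding fa_integral_def
proof (rule cSup_least)
  show "{(\<Sum>i<n. a i * \<mu> (A i)) | (n::nat) (a::nat \<Rightarrow> real) (A::nat \<Rightarrow> 'a set).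
      (\<forall>i<n. 0 \<le> a i) \<and> (\<forall>x. (\<Sum>i<n. a i * indicator (A i) x) \<le> g x)} \<noteq> {}"
    using assms(1) by (auto intro!: exI[of _ "0::nat"])
qed (use assms(2) in blast)

end

section \<open>Numbering the points of fibres\<close>

lemma indicator_image_inj_on:
  assumes "inj_on g P"
  shows "(indicator (g ` (A \<inter> P)) y :: real) = (\<Sum>t\<in>{t\<in>P. g t = y}. indicator A t)"
proof (cases "y \<in> g ` P")
  case True
  then obtain t where "t \<in> P" "g t = y" by blast
  with assms have "{t\<in>P. g t = y} = {t}" and "y \<in> g ` (A \<inter> P) \<longleftrightarrow> t \<in> A"
    by (auto dest: inj_onD)
  then show ?thesis by (simp add: indicator_def)
next
  case False
  then have "{t\<in>P. g t = y} = {}" and "y \<notin> g ` (A \<inter> P)" by auto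
  then show ?thesis by (metis indicator_simps(2) sum.empty)
qed

text \<open>The level sets of \<open>\<iota>\<close> are the pieces of \<open>D\<close> on which \<open>g\<close> is injective.\<close>

locale fibre_enumeration =
  fixes g :: "'a \<Rightarrow> 'b" and D :: "'a set" and \<iota> :: "'a \<Rightarrow> nat"
  assumes bij_betw_fibre: "bij_betw \<iota> {t\<in>D. g t = y} {..<card {t\<in>D. g t = y}}"
begin

lemma finite_fibre: "finite {t\<in>D. g t = y}"
  using bij_betw_finite[OF bij_betw_fibre] by simp

lemma inj_on_level: "inj_on g {t\<in>D. \<iota> t = k}"
proof (rule inj_onI)
  fix t u assume "t \<in> {t\<in>D. \<iota> t = k}" "u \<in> {t\<in>D. \<iota> t = k}" "g t = g u"
  then show "t = u"
    using bij_betw_imp_inj_on[OF bij_betw_fibre[of "g t"]] by (auto dest: inj_onD)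
qed

lemma image_level: "g ` {t\<in>D. \<iota> t = k} = {y. k < card {t\<in>D. g t = y}}"
proof (intro equalityI subsetI)
  fix y assume "y \<in> g ` {t\<in>D. \<iota> t = k}"
  then show "y \<in> {y. k < card {t\<in>D. g t = y}}"
    using bij_betw_apply[OF bij_betw_fibre[of y]] by auto
next
  fix y assume "y \<in> {y. k < card {t\<in>D. g t = y}}"
  then have "k \<in> \<iota> ` {t\<in>D. g t = y}"
    using bij_betw_imp_surj_on[OF bij_betw_fibre[of y]] by auto
  then show "y \<in> g ` {t\<in>D. \<iota> t = k}" by auto
qed

lemma disjoint_family_levels: "disjoint_family_on (\<lambda>k. {t\<in>D. \<iota> t = k}) K"
  by (auto simp: disjoint_family_on_def)

lemma UN_levels:
  assumes "\<And>y. card {t\<in>D. g t = y} \<le> K"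
  shows "(\<Union>k<K. {t\<in>D. \<iota> t = k}) = D"
  using bij_betw_apply[OF bij_betw_fibre] assms by (fastforce intro: less_le_trans)

lemma sum_levels:
  assumes "card {t\<in>D. g t = y} \<le> K"
  shows "(\<Sum>k<K. \<Sum>t\<in>{t\<in>D. \<iota> t = k \<and> g t = y}. \<phi> t) = (\<Sum>t\<in>{t\<in>D. g t = y}. \<phi> t)"
proof -
  have "\<iota> ` {t\<in>D. g t = y} \<subseteq> {..<K}"
    using bij_betw_apply[OF bij_betw_fibre] assms by (fastforce intro: less_le_trans)
  from sum.group[OF finite_fibre finite_lessThan this, of \<phi>] show ?thesis
    by (simp add: conj_commute conj_left_commute)
qed

end

lemma fibre_enumeration_exists:
  assumes "\<And>y. finite {t\<in>D. g t = y}"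
  obtains \<iota> where "fibre_enumeration g D \<iota>"
proof -
  obtain e where e: "\<And>y. bij_betw (e y) {t\<in>D. g t = y} {..<card {t\<in>D. g t = y}}"
    using ex_bij_betw_finite_nat[OF assms] by (metis atLeast0LessThan)
  have "bij_betw (\<lambda>t. e (g t) t) {t\<in>D. g t = y} {..<card {t\<in>D. g t = y}}" for y
    using e[of y] by (rule bij_betw_cong[THEN iffD1, rotated]) simp
  then show thesis by (intro that[of "\<lambda>t. e (g t) t"]) (simp add: fibre_enumeration_def)
qed

section \<open>Staircase approximation and bounded fibres\<close>

definition staircase :: "real \<Rightarrow> nat \<Rightarrow> ('a \<Rightarrow> real) \<Rightarrow> 'a \<Rightarrow> real" where
  "staircase \<delta> L f x = (\<Sum>j<L. \<delta> * indicator {t. real (Suc j) * \<delta> \<le> f t} x)"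

lemma staircase_approximation:
  fixes f :: "'a \<Rightarrow> real"
  assumes "\<And>x. 0 \<le> f x" and "\<And>x. f x \<le> c" and "0 < \<delta>"
  obtains L where "\<And>x. staircase \<delta> L f x \<le> f x" and "\<And>x. f x - \<delta> \<le> staircase \<delta> L f x"
proof -
  define L where "L = nat \<lceil>c / \<delta>\<rceil>"
  have "real q * \<delta> \<le> f x \<and> f x - \<delta> \<le> real q * \<delta>
      \<and> staircase \<delta> L f x = real q * \<delta>"
    if q: "q = nat \<lfloor>f x / \<delta>\<rfloor>" for x q
  proof -
    have "real q = of_int \<lfloor>f x / \<delta>\<rfloor>"
      using q assms(1)[of x] assms(3) by simp
    then have q_le: "real q \<le> f x / \<delta>" and q_gt: "f x / \<delta> < real q + 1"
      using floor_correct[of "f x / \<delta>"] by simp_all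
    have "f x / \<delta> \<le> c / \<delta>"
      using assms(2)[of x] assms(3) by (simp add: divide_right_mono)
    then have "\<lfloor>f x / \<delta>\<rfloor> \<le> \<lceil>c / \<delta>\<rceil>"
      by (meson floor_le_ceiling floor_mono order_trans)
    then have "q \<le> L" by (simp add: q L_def nat_mono)
    have "real (Suc j) * \<delta> \<le> f x \<longleftrightarrow> j < q" for j
      using q_le q_gt assms(3) by (auto simp: pos_le_divide_eq[symmetric])
    then have "staircase \<delta> L f x = (\<Sum>j\<in>{..<L} \<inter> {..<q}. \<delta>)"
      by (simp add: staircase_def indicator_def sum.inter_restrict lessThan_def)
    also have "{..<L} \<inter> {..<q} = {..<q}" using \<open>q \<le> L\<close> by auto
    finally show ?thesis
      using q_le q_gt assms(3) by (simp add: field_simps)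
  qed
  then show thesis by (intro that[of L]) force+
qed

lemma finite_card_le_of_bounded_sums:
  fixes f :: "'a \<Rightarrow> real"
  assumes "0 < \<delta>" and "\<And>t. t \<in> F \<Longrightarrow> \<delta> \<le> f t"
    and "\<And>G. finite G \<Longrightarrow> G \<subseteq> F \<Longrightarrow> sum f G \<le> M"
  shows "finite F" and "card F \<le> nat \<lceil>M / \<delta>\<rceil>"
proof -
  have card_G: "real (card G) * \<delta> \<le> M" if "finite G" "G \<subseteq> F" for G
  proof -
    have "real (card G) * \<delta> = (\<Sum>t\<in>G. \<delta>)" by simp
    also have "\<dots> \<le> sum f G" using that assms(2) by (intro sum_mono) auto
    finally show ?thesis using assms(3)[OF that] by linarith
  qed
  show "finite F"
  proof (rule ccontr)
    assume "infinite F"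
    then obtain G where G: "finite G" "G \<subseteq> F" "card G = nat \<lceil>M / \<delta>\<rceil> + 1"
      using infinite_arbitrarily_large by blast
    then have "M / \<delta> < real (card G)" by linarith
    with card_G[OF G(1,2)] assms(1) show False by (simp add: divide_less_eq)
  qed
  then have "real (card F) * \<delta> \<le> M" by (rule card_G) simp
  with assms(1) have "real (card F) \<le> M / \<delta>" by (simp add: pos_le_divide_eq)
  then show "card F \<le> nat \<lceil>M / \<delta>\<rceil>" by linarith
qed

lemma lconv_nonneg: "(\<And>x. 0 \<le> f x) \<Longrightarrow> 0 \<le> lconv s f x"
  unfolding lconv_def by (simp add: infsum_nonneg)

lemma lconv_finite_approximation:
  fixes f :: "'a::semigroup_mult \<Rightarrow> real"
  assumes "\<And>x. f summable_on {t. s * t = x}" and "0 < \<epsilon>"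
  obtains E where "\<And>x. finite (E x)" and "\<And>x. E x \<subseteq> {t. s * t = x}"
    and "\<And>x. lconv s f x - \<epsilon> \<le> sum f (E x)"
proof -
  have "\<exists>F. finite F \<and> F \<subseteq> {t. s * t = x} \<and> lconv s f x - \<epsilon> \<le> sum f F" for x
    using infsum_finite_approximation[OF assms(1) assms(2), of x]
    by (auto simp: lconv_def dist_real_def)
  then show thesis using that by metis
qed

lemma lconv_support_fibres:
  fixes f h :: "'a::semigroup_mult \<Rightarrow> real"
  assumes f_nonneg: "\<And>x. 0 \<le> f x" and summable: "\<And>x. f summable_on {t. s * t = x}"
    and M: "\<And>x. lconv s f x \<le> M" and h_le: "\<And>t. h t \<le> f t"
    and "0 < \<delta>" and h_ge: "\<forall>t\<in>D. \<delta> \<le> h t"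
  shows "finite {t\<in>D. s * t = x}" and "card {t\<in>D. s * t = x} \<le> nat \<lceil>M / \<delta>\<rceil>"
    and "(\<Sum>t\<in>{t\<in>D. s * t = x}. h t) \<le> lconv s f x"
proof -
  have sums: "sum h G \<le> lconv s f x" if "finite G" "G \<subseteq> {t\<in>D. s * t = x}" for G
  proof -
    have "sum h G \<le> sum f G" using h_le by (rule sum_mono)
    also have "\<dots> \<le> lconv s f x"
      unfolding lconv_def using that f_nonneg by (intro finite_sum_le_infsum summable) auto
    finally show ?thesis .
  qed
  have fibre_ge: "\<And>t. t \<in> {t\<in>D. s * t = x} \<Longrightarrow> \<delta> \<le> h t" using h_ge by blast
  have fibre_le: "sum h G \<le> M" if "finite G" "G \<subseteq> {t\<in>D. s * t = x}" for G
    using sums[OF that] M[of x] by linarith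
  note bounds = finite_card_le_of_bounded_sums[OF \<open>0 < \<delta>\<close> fibre_ge fibre_le]
  show "finite {t\<in>D. s * t = x}" by (rule bounds(1))
  show "card {t\<in>D. s * t = x} \<le> nat \<lceil>M / \<delta>\<rceil>" by (rule bounds(2))
  show "(\<Sum>t\<in>{t\<in>D. s * t = x}. h t) \<le> lconv s f x" by (rule sums[OF bounds(1) order_refl])
qed

locale fairly_invariant_fa_prob_space = fa_prob_space \<mu>
  for \<mu> :: "'a::semigroup_mult set \<Rightarrow> real" +
  assumes left_fairly_invariant: "left_fairly_invariant \<mu>"
begin

lemma measure_image_mult: "inj_on ((*) s) A \<Longrightarrow> \<mu> ((*) s ` A) = \<mu> A"
  using left_fairly_invariant unfolding left_fairly_invariant_def by blast

lemma transport_simple_function: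
  fixes a :: "'i \<Rightarrow> real" and A :: "'i \<Rightarrow> 'a set"
  assumes "finite I" and "\<And>x. finite {t\<in>D. s * t = x}" and "\<And>x. card {t\<in>D. s * t = x} \<le> K"
  obtains B :: "'i \<times> nat \<Rightarrow> 'a set" where
    "\<And>x. (\<Sum>p\<in>I \<times> {..<K}. a (fst p) * indicator (B p) x)
        = (\<Sum>t\<in>{t\<in>D. s * t = x}. \<Sum>i\<in>I. a i * indicator (A i) t)"
    and "(\<Sum>p\<in>I \<times> {..<K}. a (fst p) * \<mu> (B p)) = (\<Sum>i\<in>I. a i * \<mu> (A i \<inter> D))"
proof -
  obtain \<iota> where "fibre_enumeration ((*) s) D \<iota>"
    using fibre_enumeration_exists assms(2) by blast
  then interpret fibre_enumeration "(*) s" D \<iota> .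
  let ?L = "\<lambda>k. {t\<in>D. \<iota> t = k}"
  let ?B = "\<lambda>p. (*) s ` (A (fst p) \<inter> ?L (snd p))"
  have "(\<Sum>p\<in>I \<times> {..<K}. a (fst p) * indicator (?B p) x)
      = (\<Sum>i\<in>I. a i * (\<Sum>k<K. \<Sum>t\<in>{t\<in>D. \<iota> t = k \<and> s * t = x}. indicator (A i) t))" for x
    by (simp add: sum.cartesian_product indicator_image_inj_on[OF inj_on_level]
        sum_distrib_left conj_assoc split_def)
  also have "\<dots> x = (\<Sum>t\<in>{t\<in>D. s * t = x}. \<Sum>i\<in>I. a i * indicator (A i) t)" for x
    by (simp add: sum_levels[OF assms(3)] sum_distrib_left sum.swap[of _ I])
  moreover have "\<mu> ((*) s ` (C \<inter> ?L k)) = \<mu> (C \<inter> ?L k)" for C k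
    by (rule measure_image_mult, rule inj_on_subset[OF inj_on_level[of k]]) blast
  then have "(\<Sum>p\<in>I \<times> {..<K}. a (fst p) * \<mu> (?B p))
      = (\<Sum>i\<in>I. a i * (\<Sum>k<K. \<mu> (A i \<inter> ?L k)))"
    by (simp add: sum.cartesian_product split_def sum_distrib_left)
  moreover have "(\<Sum>k<K. \<mu> (A i \<inter> ?L k)) = \<mu> (A i \<inter> D)" for i
  proof -
    have "(\<Sum>k<K. \<mu> (A i \<inter> ?L k)) = \<mu> (\<Union>k<K. A i \<inter> ?L k)"
      by (rule measure_finite_UN[symmetric]) (auto simp: disjoint_family_on_def)
    also have "(\<Union>k<K. A i \<inter> ?L k) = A i \<inter> D"
      using UN_levels[OF assms(3)] by blast
    finally show ?thesis .
  qed
  ultimately show thesis by (intro that[of ?B]) simp_all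
qed

lemma measure_large_fibres:
  assumes "\<And>x. finite {t\<in>D. s * t = x}"
  shows "real N * \<mu> {x. N \<le> card {t\<in>D. s * t = x}} \<le> 1"
proof -
  obtain \<iota> where "fibre_enumeration ((*) s) D \<iota>"
    using fibre_enumeration_exists assms by blast
  then interpret fibre_enumeration "(*) s" D \<iota> .
  let ?Y = "{x. N \<le> card {t\<in>D. s * t = x}}"
  have "\<mu> ?Y \<le> \<mu> {t\<in>D. \<iota> t = k}" if "k < N" for k
  proof -
    have "\<mu> ?Y \<le> \<mu> ((*) s ` {t\<in>D. \<iota> t = k})"
      unfolding image_level using that by (intro measure_mono) auto
    then show ?thesis by (simp add: measure_image_mult[OF inj_on_level])
  qed
  then have "real N * \<mu> ?Y \<le> (\<Sum>k<N. \<mu> {t\<in>D. \<iota> t = k})"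
    using sum_mono[of "{..<N}" "\<lambda>_. \<mu> ?Y"] by simp
  also have "\<dots> = \<mu> (\<Union>k<N. {t\<in>D. \<iota> t = k})"
    by (simp add: measure_finite_UN disjoint_family_levels)
  also have "\<dots> \<le> 1" by (rule measure_le_1)
  finally show ?thesis .
qed

lemma simple_le_fa_integral_lconv:
  fixes f :: "'a \<Rightarrow> real" and a :: "nat \<Rightarrow> real"
  assumes f_nonneg: "\<And>x. 0 \<le> f x" and summable: "\<And>x. f summable_on {t. s * t = x}"
    and bdd: "bdd_above (range (lconv s f))"
    and a_nonneg: "\<forall>i<n. 0 \<le> a i" and le_f: "\<forall>x. (\<Sum>i<n. a i * indicator (A i) x) \<le> f x"
  shows "(\<Sum>i<n. a i * \<mu> (A i)) \<le> fa_integral \<mu> (lconv s f)"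
proof -
  obtain M where M: "\<And>x. lconv s f x \<le> M"
    using bdd by (auto simp: bdd_above_def)
  define h where "h t = (\<Sum>i<n. a i * indicator (A i) t)" for t
  define \<delta> where "\<delta> = Min (insert 1 {a i | i. i < n \<and> 0 < a i})"
  have "finite {a i | i. i < n \<and> 0 < a i}" by simp
  then have \<delta>_pos: "0 < \<delta>" and \<delta>_le: "\<And>i. i < n \<Longrightarrow> 0 < a i \<Longrightarrow> \<delta> \<le> a i"
    unfolding \<delta>_def by (auto intro!: Min_le)
  have a_le_h: "a i \<le> h t" if "i < n" "t \<in> A i" for i t
    using member_le_sum[of i "{..<n}" "\<lambda>i. a i * indicator (A i) t"] that a_nonneg
    by (simp add: h_def)
  define D where "D = {t. \<exists>i<n. 0 < a i \<and> t \<in> A i}"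
  have h_ge: "\<forall>t\<in>D. \<delta> \<le> h t"
  proof
    fix t assume "t \<in> D"
    then obtain i where "i < n" "0 < a i" "t \<in> A i" by (auto simp: D_def)
    then show "\<delta> \<le> h t" using \<delta>_le a_le_h by (meson order_trans)
  qed
  have "h t \<le> f t" for t using le_f by (simp add: h_def)
  note fibres = lconv_support_fibres[where h = h and D = D, OF f_nonneg summable M this \<delta>_pos h_ge]
  define K where "K = nat \<lceil>M / \<delta>\<rceil>"
  have fibre_card: "card {t\<in>D. s * t = x} \<le> K" for x
    unfolding K_def by (rule fibres(2))
  obtain B where B_ind: "\<And>x. (\<Sum>p\<in>{..<n} \<times> {..<K}. a (fst p) * indicator (B p) x)
        = (\<Sum>t\<in>{t\<in>D. s * t = x}. \<Sum>i<n. a i * indicator (A i) t)"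
    and B_measure: "(\<Sum>p\<in>{..<n} \<times> {..<K}. a (fst p) * \<mu> (B p)) = (\<Sum>i<n. a i * \<mu> (A i \<inter> D))"
    by (rule transport_simple_function[OF finite_lessThan[of n] fibres(1) fibre_card, of a A]) blast
  have "(\<Sum>i<n. a i * \<mu> (A i)) = (\<Sum>i<n. a i * \<mu> (A i \<inter> D))"
  proof (rule sum.cong)
    fix i assume "i \<in> {..<n}"
    then have "a i = 0 \<or> 0 < a i \<and> i < n" using a_nonneg by force
    then have "a i = 0 \<or> A i \<inter> D = A i" by (auto simp: D_def)
    then show "a i * \<mu> (A i) = a i * \<mu> (A i \<inter> D)" by auto
  qed simp
  also have "\<dots> \<le> fa_integral \<mu> (lconv s f)"
    unfolding B_measure[symmetric]
  proof (rule fa_integral_upper[OF bdd])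
    fix x
    show "(\<Sum>p\<in>{..<n} \<times> {..<K}. a (fst p) * indicator (B p) x) \<le> lconv s f x"
      unfolding B_ind h_def[symmetric] by (rule fibres(3))
  qed (use a_nonneg in auto)
  finally show ?thesis .
qed

lemma fibre_sum_approximation:
  fixes f :: "'a \<Rightarrow> real"
  assumes f_nonneg: "\<And>x. 0 \<le> f x" and bdd_f: "bdd_above (range f)" and \<delta>_pos: "0 < \<delta>"
    and fibre_finite: "\<And>x. finite {t\<in>D. s * t = x}"
    and fibre_card: "\<And>x. card {t\<in>D. s * t = x} \<le> N"
  obtains L and B :: "nat \<times> nat \<Rightarrow> 'a set" where
    "\<And>x. (\<Sum>t\<in>{t\<in>D. s * t = x}. f t)
        \<le> (\<Sum>p\<in>{..<L} \<times> {..<N}. \<delta> * indicator (B p) x) + real (card {t\<in>D. s * t = x}) * \<delta>"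
    and "(\<Sum>p\<in>{..<L} \<times> {..<N}. \<delta> * \<mu> (B p)) \<le> fa_integral \<mu> f"
proof -
  obtain c where c: "\<And>x. f x \<le> c"
    using bdd_f by (auto simp: bdd_above_def)
  obtain L where stair_le: "\<And>t. staircase \<delta> L f t \<le> f t"
    and stair_ge: "\<And>t. f t - \<delta> \<le> staircase \<delta> L f t"
    using staircase_approximation[of f c \<delta>, OF f_nonneg c \<delta>_pos] by blast
  obtain B where B_ind: "\<And>x. (\<Sum>p\<in>{..<L} \<times> {..<N}. \<delta> * indicator (B p) x)
        = (\<Sum>t\<in>{t\<in>D. s * t = x}. staircase \<delta> L f t)"
    and B_measure: "(\<Sum>p\<in>{..<L} \<times> {..<N}. \<delta> * \<mu> (B p))
        = (\<Sum>j<L. \<delta> * \<mu> ({t. real (Suc j) * \<delta> \<le> f t} \<inter> D))"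
    unfolding staircase_def
    by (rule transport_simple_function[of "{..<L}" D s N "\<lambda>_. \<delta>" "\<lambda>j. {t. real (Suc j) * \<delta> \<le> f t}",
          OF finite_lessThan fibre_finite fibre_card]) blast
  show thesis
  proof (rule that)
    show "(\<Sum>t\<in>{t\<in>D. s * t = x}. f t)
        \<le> (\<Sum>p\<in>{..<L} \<times> {..<N}. \<delta> * indicator (B p) x) + real (card {t\<in>D. s * t = x}) * \<delta>" for x
      using sum_mono[of "{t\<in>D. s * t = x}" f "\<lambda>t. staircase \<delta> L f t + \<delta>"] stair_ge
      by (simp add: B_ind sum.distrib algebra_simps)
    show "(\<Sum>p\<in>{..<L} \<times> {..<N}. \<delta> * \<mu> (B p)) \<le> fa_integral \<mu> f"
      unfolding B_measure
    proof (rule fa_integral_upper[OF bdd_f])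
      fix x
      have "(\<Sum>j<L. \<delta> * indicator ({t. real (Suc j) * \<delta> \<le> f t} \<inter> D) x) \<le> staircase \<delta> L f x"
        unfolding staircase_def using \<delta>_pos
        by (intro sum_mono mult_left_mono) (auto simp: indicator_def)
      then show "(\<Sum>j<L. \<delta> * indicator ({t. real (Suc j) * \<delta> \<le> f t} \<inter> D) x) \<le> f x"
        using stair_le[of x] by linarith
    qed (use \<delta>_pos in auto)
  qed
qed

lemma simple_lconv_le_fa_integral:
  fixes f :: "'a \<Rightarrow> real" and b :: "nat \<Rightarrow> real"
  assumes f_nonneg: "\<And>x. 0 \<le> f x" and summable: "\<And>x. f summable_on {t. s * t = x}"
    and bdd_f: "bdd_above (range f)" and bdd: "bdd_above (range (lconv s f))"
    and le_lconv: "\<forall>x. (\<Sum>j<m. b j * indicator (B j) x) \<le> lconv s f x"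
    and "0 < \<epsilon>"
  shows "(\<Sum>j<m. b j * \<mu> (B j)) \<le> fa_integral \<mu> f + 3 * \<epsilon>"
proof -
  obtain M where M: "\<And>x. lconv s f x \<le> M"
    using bdd by (auto simp: bdd_above_def)
  define N where "N = nat \<lceil>M / \<epsilon>\<rceil> + 1"
  have "0 < N" by (simp add: N_def)
  have "M / \<epsilon> \<le> real N" unfolding N_def by linarith
  then have M_le: "M \<le> real N * \<epsilon>" using \<open>0 < \<epsilon>\<close> by (simp add: field_simps)
  define \<delta> where "\<delta> = \<epsilon> / real N"
  have \<delta>_pos: "0 < \<delta>" and N_\<delta>: "real N * \<delta> = \<epsilon>"
    using \<open>0 < \<epsilon>\<close> \<open>0 < N\<close> by (simp_all add: \<delta>_def)
  obtain E where E_finite: "\<And>x. finite (E x)" and E_fibre: "\<And>x. E x \<subseteq> {t. s * t = x}"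
    and E_approx: "\<And>x. lconv s f x - \<epsilon> \<le> sum f (E x)"
    by (rule lconv_finite_approximation[OF summable \<open>0 < \<epsilon>\<close>]) blast
  define Y where "Y = {x. N \<le> card (E x)}"
  have "{t \<in> {t. t \<in> E (s * t)}. s * t = x} = E x" for x
    using E_fibre by auto
  then have "real N * \<mu> Y \<le> 1"
    using measure_large_fibres[of "{t. t \<in> E (s * t)}" s N] E_finite by (simp add: Y_def)
  have "M * \<mu> Y \<le> real N * \<epsilon> * \<mu> Y"
    by (rule mult_right_mono[OF M_le measure_nonneg])
  also have "\<dots> = \<epsilon> * (real N * \<mu> Y)" by simp
  also have "\<dots> \<le> \<epsilon>"
    using \<open>real N * \<mu> Y \<le> 1\<close> \<open>0 < \<epsilon>\<close> by (simp add: mult_left_le)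
  finally have "M * \<mu> Y \<le> \<epsilon>" .
  define D where "D = {t. t \<in> E (s * t) \<and> s * t \<notin> Y}"
  have fibre_D: "{t\<in>D. s * t = x} = (if x \<in> Y then {} else E x)" for x
    using E_fibre by (auto simp: D_def)
  have fibre_D_finite: "finite {t\<in>D. s * t = x}"
    and fibre_D_card: "card {t\<in>D. s * t = x} \<le> N" for x
    using E_finite by (simp_all add: fibre_D Y_def)
  obtain L :: nat and B' where B'_approx: "\<And>x. (\<Sum>t\<in>{t\<in>D. s * t = x}. f t)
        \<le> (\<Sum>p\<in>{..<L} \<times> {..<N}. \<delta> * indicator (B' p) x) + real (card {t\<in>D. s * t = x}) * \<delta>"
    and B'_integral: "(\<Sum>p\<in>{..<L} \<times> {..<N}. \<delta> * \<mu> (B' p)) \<le> fa_integral \<mu> f"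
    by (rule fibre_sum_approximation[of f \<delta> D s N, OF f_nonneg bdd_f \<delta>_pos fibre_D_finite fibre_D_card],
        rule that)
  have "\<forall>x\<in>-Y. (\<Sum>j<m. b j * indicator (B j) x)
      \<le> 2 * \<epsilon> + (\<Sum>p\<in>{..<L} \<times> {..<N}. \<delta> * indicator (B' p) x)"
  proof
    fix x assume "x \<in> -Y"
    then have "card (E x) \<le> N" by (simp add: Y_def)
    then have "real (card (E x)) * \<delta> \<le> \<epsilon>"
      using N_\<delta> \<delta>_pos by (metis mult_right_mono of_nat_le_iff less_imp_le)
    then show "(\<Sum>j<m. b j * indicator (B j) x)
        \<le> 2 * \<epsilon> + (\<Sum>p\<in>{..<L} \<times> {..<N}. \<delta> * indicator (B' p) x)"
      using le_lconv[rule_format, of x] E_approx[of x] B'_approx[of x] \<open>x \<in> -Y\<close>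
      by (simp add: fibre_D)
  qed
  moreover have "\<forall>x\<in>Y. (\<Sum>j<m. b j * indicator (B j) x) \<le> M"
    using le_lconv M by (meson order_trans)
  ultimately have "(\<Sum>j<m. b j * \<mu> (B j))
      \<le> M * \<mu> Y + 2 * \<epsilon> + (\<Sum>p\<in>{..<L} \<times> {..<N}. \<delta> * \<mu> (B' p))"
    by (intro simple_integral_mono_except) (use \<open>0 < \<epsilon>\<close> \<delta>_pos in \<open>auto intro: finite_cartesian_product\<close>)
  with \<open>M * \<mu> Y \<le> \<epsilon>\<close> B'_integral show ?thesis by linarith
qed

lemma fa_integral_le_fa_integral_lconv:
  assumes "\<And>x. 0 \<le> f x" and "\<And>x. f summable_on {t. s * t = x}"
    and "bdd_above (range (lconv s f))"
  shows "fa_integral \<mu> f \<le> fa_integral \<mu> (lconv s f)"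
  by (rule fa_integral_least[OF assms(1)]) (rule simple_le_fa_integral_lconv[OF assms])

lemma fa_integral_lconv_le_fa_integral:
  assumes "\<And>x. 0 \<le> f x" and "\<And>x. f summable_on {t. s * t = x}"
    and "bdd_above (range f)" and "bdd_above (range (lconv s f))"
  shows "fa_integral \<mu> (lconv s f) \<le> fa_integral \<mu> f"
proof (rule fa_integral_least)
  show "0 \<le> lconv s f x" for x
    using assms(1) by (rule lconv_nonneg)
  fix n and b :: "nat \<Rightarrow> real" and B
  assume le_lconv: "\<forall>x. (\<Sum>j<n. b j * indicator (B j) x) \<le> lconv s f x"
  show "(\<Sum>j<n. b j * \<mu> (B j)) \<le> fa_integral \<mu> f"
  proof (rule field_le_epsilon)
    fix \<epsilon> :: real assume "0 < \<epsilon>"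
    then have "(\<Sum>j<n. b j * \<mu> (B j)) \<le> fa_integral \<mu> f + 3 * (\<epsilon> / 3)"
      by (intro simple_lconv_le_fa_integral[OF assms le_lconv]) simp
    then show "(\<Sum>j<n. b j * \<mu> (B j)) \<le> fa_integral \<mu> f + \<epsilon>" by simp
  qed
qed

end

theorem mainTheorem2:
  fixes \<mu> :: "'a::semigroup_mult set \<Rightarrow> real" and s :: 'a and f :: "'a \<Rightarrow> real"
  assumes "left_fairly_amenable TYPE('a)"
    and "fa_prob_measure \<mu>" and "left_fairly_invariant \<mu>"
    and "\<forall>x. 0 \<le> f x" and "bdd_above (range f)"
    and "\<forall>x. f summable_on {t. s * t = x}"
    and "bdd_above (range (lconv s f))"
  shows "fa_integral \<mu> (lconv s f) = fa_integral \<mu> f"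
proof -
  interpret fairly_invariant_fa_prob_space \<mu>
    using assms(2,3) by unfold_locales
  have "fa_integral \<mu> (lconv s f) \<le> fa_integral \<mu> f"
    by (rule fa_integral_lconv_le_fa_integral) (use assms in auto)
  moreover have "fa_integral \<mu> f \<le> fa_integral \<mu> (lconv s f)"
    by (rule fa_integral_le_fa_integral_lconv) (use assms in auto)
  ultimately show ?thesis by (rule antisym)
qed

end
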